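(* Let $S(t)$ be an inverse subordinator, $T>0$, $Z_0>0$, $\sigma>0$. Assume the option is at the money ($K=Z_0$), the interest rate is $r=0$, and the Bachelier volatility is $\sigma^{Ba}=\sigma Z_0$. Let $C^{Ba}_S(T)$ and $C_S(T)$ be the fair prices of the European call option with strike $K$ and expiry $T$ in the subordinated Bachelier model and in the subordinated Black–Scholes model, respectively. Then $$0\le C^{Ba}_S(T)-C_S(T)\le \mathbb{E}\big[S(T)^{3/2}\big]\cdot\frac{Z_0}{12\sqrt{2\pi}}\,\sigma^3 .$$ The same two-sided bound holds for the corresponding European put prices.
   Context: Inverse subordinator: let $\nu$ be a Lévy measure on $(0,\infty)$ with $\int_0^\infty \min(1,x)\,\nu(dx)<\infty$ and $\nu(0,\infty)=\infty$, let $\psi(u)=\int_0^\infty(1-e^{-ux})\,\nu(dx)$, and let $U_\psi$ be the subordinator with $\mathbb{E}e^{-uU_\psi(t)}=e^{-t\psi(u)}$; the inverse subordinator is $S(t)=\inf\{\tau>0: U_\psi(\tau)>t\}$. $B$ is a standard Brownian motion independent of $S$. Subordinated Bachelier model: underlying $Z^{Ba}_S(t)=Z_0+\mu S(t)+\sigma^{Ba}B(S(t))$; subordinated B-S model: underlying $Z_S(t)=Z_0\exp(\mu S(t)+\sigma B(S(t)))$. For $\tau\ge0$, let $C^{Ba}(\tau)$ be the classical Bachelier call price with time to maturity $\tau$ (with $r=0$, $K=Z_0$: $C^{Ba}(\tau)=\sigma^{Ba}\sqrt{\tau}/\sqrt{2\pi}$) and $C(\tau)$ the classical Black–Scholes call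 price (with $r=0$, $K=Z_0$: $C(\tau)=Z_0(2\Phi(\sigma\sqrt\tau/2)-1)$, $\Phi$ the standard normal CDF). The fair prices in the subordinated models are $C^{Ba}_S(T)=\mathbb{E}\,C^{Ba}(S(T))$ and $C_S(T)=\mathbb{E}\,C(S(T))$ (prices under the respective minimal-entropy martingale measures); put prices are defined analogously. *)

theory Defs
  imports "HOL-Probability.Probability"
begin

definition levy_measure :: "real measure \<Rightarrow> bool" where
  "levy_measure \<nu> \<longleftrightarrow>
     sets \<nu> = sets borel \<and>
     emeasure \<nu> {..0} = 0 \<and>
     (\<integral>\<^sup>+ x. ennreal (min 1 x) \<partial>\<nu>) < \<infinity> \<and>
     emeasure \<nu> {0<..} = \<infinity>"

definition laplace_exponent :: "real measure \<Rightarrow> real \<Rightarrow> real" where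
  "laplace_exponent \<nu> u = (\<integral> x. (1 - exp (- u * x)) \<partial>\<nu>)"

definition subordinator :: "'a measure \<Rightarrow> real measure \<Rightarrow> (real \<Rightarrow> 'a \<Rightarrow> real) \<Rightarrow> bool" where
  "subordinator M \<nu> U \<longleftrightarrow>
     prob_space M \<and>
     (\<forall>t\<ge>0. U t \<in> borel_measurable M) \<and>
     (\<forall>\<omega>\<in>space M. U 0 \<omega> = 0) \<and>
     (AE \<omega> in M. mono_on {0..} (\<lambda>t. U t \<omega>) \<and>
                  (\<forall>t\<ge>0. continuous (at_right t) (\<lambda>s. U s \<omega>))) \<and>
     (\<forall>(ts::nat \<Rightarrow> real) n. 0 \<le> ts 0 \<and> (\<forall>i<n. ts i < ts (Suc i)) \<longrightarrow>
        prob_space.indep_vars M (\<lambda>_. borel) (\<lambda>i \<omega>. U (ts (Suc i)) \<omega> - U (ts i) \<omega>) {..<n}) \<and>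
     (\<forall>s\<ge>0. \<forall>t\<ge>0. distr M borel (\<lambda>\<omega>. U (s + t) \<omega> - U s \<omega>) = distr M borel (U t)) \<and>
     (\<forall>t\<ge>0. \<forall>u\<ge>0. prob_space.expectation M (\<lambda>\<omega>. exp (- u * U t \<omega>))
                      = exp (- t * laplace_exponent \<nu> u))"

definition inverse_subordinator :: "(real \<Rightarrow> 'a \<Rightarrow> real) \<Rightarrow> real \<Rightarrow> 'a \<Rightarrow> real" where
  "inverse_subordinator U t \<omega> = Inf {\<tau>. 0 < \<tau> \<and> t < U \<tau> \<omega>}"

definition Phi :: "real \<Rightarrow> real" where
  "Phi x = measure (density lborel std_normal_density) {..x}"

definition bachelier_call :: "real \<Rightarrow> real \<Rightarrow> real \<Rightarrow> real \<Rightarrow> real" where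
  "bachelier_call Z0 K sB \<tau> =
     (if \<tau> = 0 then max (Z0 - K) 0 else
      (let d = (Z0 - K) / (sB * sqrt \<tau>) in
        (Z0 - K) * Phi d + sB * sqrt \<tau> * std_normal_density d))"

definition bachelier_put :: "real \<Rightarrow> real \<Rightarrow> real \<Rightarrow> real \<Rightarrow> real" where
  "bachelier_put Z0 K sB \<tau> =
     (if \<tau> = 0 then max (K - Z0) 0 else
      (let d = (Z0 - K) / (sB * sqrt \<tau>) in
        (K - Z0) * Phi (- d) + sB * sqrt \<tau> * std_normal_density d))"

definition bs_call :: "real \<Rightarrow> real \<Rightarrow> real \<Rightarrow> real \<Rightarrow> real" where
  "bs_call Z0 K s \<tau> =
     (if \<tau> = 0 then max (Z0 - K) 0 else
      (let d1 = (ln (Z0 / K) + s\<^sup>2 / 2 * \<tau>) / (s * sqrt \<tau>);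
           d2 = d1 - s * sqrt \<tau> in
        Z0 * Phi d1 - K * Phi d2))"

definition bs_put :: "real \<Rightarrow> real \<Rightarrow> real \<Rightarrow> real \<Rightarrow> real" where
  "bs_put Z0 K s \<tau> =
     (if \<tau> = 0 then max (K - Z0) 0 else
      (let d1 = (ln (Z0 / K) + s\<^sup>2 / 2 * \<tau>) / (s * sqrt \<tau>);
           d2 = d1 - s * sqrt \<tau> in
        K * Phi (- d2) - Z0 * Phi (- d1)))"

end

theory Submission
  imports Defs
begin

text \<open>At the money both classical prices depend on \<open>\<tau>\<close> only through \<open>sqrt \<tau>\<close>: the Bachelier
  price is \<open>\<sigma> Z0 \<phi>(0) sqrt \<tau>\<close> and the Black-Scholes price is \<open>Z0 (\<Phi>(x) - \<Phi>(-x))\<close> with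
  \<open>x = \<sigma> sqrt \<tau> / 2\<close>. Integrating \<open>\<phi>(0) (1 - y\<^sup>2/2) \<le> \<phi>(y) \<le> \<phi>(0)\<close> over \<open>[-x, x]\<close> squeezes
  \<open>\<Phi>(x) - \<Phi>(-x)\<close> between \<open>2 \<phi>(0) (x - x\<^sup>3/6)\<close> and \<open>2 \<phi>(0) x\<close>, so the price gap lies
  between 0 and a constant times \<open>\<tau>\<^bsup>3/2\<^esup>\<close>. Taking expectations at \<open>\<tau> = S(T)\<close> needs
  \<open>S(T) \<ge> 0\<close> almost surely and \<open>E S(T)\<^sup>2 < \<infinity>\<close>; both follow from the Chernoff bound
  \<open>P(S(T) > t) \<le> P(U(t) \<le> T) \<le> exp (T - t \<psi>(1))\<close>, where \<open>\<psi>(1) > 0\<close> because \<open>\<nu>\<close> is not zero.\<close>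

lemma Phi_diff_eq_integral:
  assumes "a \<le> b"
  shows "Phi b - Phi a = integral {a..b} std_normal_density"
proof (cases "a = b")
  case False
  let ?N = "density lborel std_normal_density"
  interpret real_distribution ?N
    unfolding real_distribution_def real_distribution_axioms_def
    using prob_space_normal_density by auto
  have "Phi b - Phi a = measure ?N {a<..b}"
    using cdf_diff_eq assms False by (simp add: Phi_def cdf_def)
  moreover have "emeasure ?N {a<..b} = (\<integral>\<^sup>+ x. ennreal (std_normal_density x * indicator {a<..b} x) \<partial>lborel)"
    by (subst emeasure_density) (auto intro!: nn_integral_cong simp: indicator_def)
  then have "(\<integral>\<^sup>+ x. ennreal (std_normal_density x * indicator {a<..b} x) \<partial>lborel) = measure ?N {a<..b}"
    by (simp add: emeasure_eq_measure)
  then have "(std_normal_density has_integral measure ?N {a<..b}) {a<..b}"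
    by (subst has_integral_restrict_UNIV[symmetric], intro nn_integral_has_integral)
       (auto simp: normal_density_nonneg indicator_def of_bool_def if_distrib cong: if_cong)
  then have "(std_normal_density has_integral measure ?N {a<..b}) {a..b}"
    by (subst has_integral_spike_set_eq[where T="{a<..b}"]) (auto intro: negligible_subset[of "{a}"])
  ultimately show ?thesis by (simp add: integral_unique)
qed simp

lemma Phi_has_real_derivative: "(Phi has_real_derivative std_normal_density x) (at x)"
proof -
  have "continuous_on {x - 1..x + 1} std_normal_density"
    unfolding std_normal_density_def by (intro continuous_intros) auto
  then have "((\<lambda>y. integral {x - 1..y} std_normal_density) has_real_derivative std_normal_density x)
      (at x within {x - 1..x + 1})"
    by (rule integral_has_real_derivative) auto
  then have "((\<lambda>y. Phi (x - 1) + integral {x - 1..y} std_normal_density)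
      has_real_derivative std_normal_density x) (at x)"
    using DERIV_add[OF DERIV_const] by (simp add: at_within_Icc_at)
  then show ?thesis
    by (rule has_field_derivative_transform_within_open[where S="{x - 1<..}"])
       (auto simp: Phi_diff_eq_integral[symmetric])
qed

lemma strict_mono_Phi: "strict_mono Phi"
proof (rule strict_monoI)
  fix a b :: real assume "a < b"
  then show "Phi a < Phi b"
    by (rule DERIV_pos_imp_increasing)
       (use Phi_has_real_derivative in \<open>force simp: std_normal_density_def\<close>)
qed

lemma borel_measurable_Phi [measurable]: "Phi \<in> borel_measurable borel"
  by (intro borel_measurable_mono strict_mono_mono strict_mono_Phi)

definition std_normal_band :: "real \<Rightarrow> real" where
  "std_normal_band x = Phi x - Phi (- x)"

lemma std_normal_band_0 [simp]: "std_normal_band 0 = 0"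
  by (simp add: std_normal_band_def)

lemma std_normal_band_has_real_derivative:
  "(std_normal_band has_real_derivative 2 * std_normal_density x) (at x)"
proof -
  have "((\<lambda>y. Phi (- y)) has_real_derivative std_normal_density (- x) * - 1) (at x)"
    by (rule DERIV_chain2[OF Phi_has_real_derivative]) (auto intro!: derivative_eq_intros)
  from DERIV_diff[OF Phi_has_real_derivative this] show ?thesis
    by (simp add: std_normal_band_def[abs_def] std_normal_density_def)
qed

lemma continuous_on_std_normal_band: "continuous_on A std_normal_band"
  by (meson DERIV_isCont continuous_at_imp_continuous_on std_normal_band_has_real_derivative)

lemma strict_mono_std_normal_band: "strict_mono std_normal_band"
proof (rule strict_monoI)
  fix a b :: real assume "a < b"
  then show "std_normal_band a < std_normal_band b"
    by (rule DERIV_pos_imp_increasing)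
       (use std_normal_band_has_real_derivative in \<open>force simp: std_normal_density_def\<close>)
qed

lemma std_normal_band_nonneg: "0 \<le> x \<Longrightarrow> 0 \<le> std_normal_band x"
  using strict_mono_less_eq[OF strict_mono_std_normal_band, of 0 x] by simp

lemma std_normal_band_le:
  assumes "0 \<le> x"
  shows "std_normal_band x \<le> 2 * std_normal_density 0 * x"
proof -
  let ?d = "\<lambda>y. 2 * std_normal_density 0 * y - std_normal_band y"
  have "?d 0 \<le> ?d x"
  proof (rule DERIV_nonneg_imp_increasing_open[OF assms])
    fix y :: real
    have "(?d has_real_derivative 2 * std_normal_density 0 * 1 - 2 * std_normal_density y) (at y)"
      by (intro DERIV_diff DERIV_cmult DERIV_ident std_normal_band_has_real_derivative)
    moreover have "std_normal_density y \<le> std_normal_density 0"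
      by (simp add: std_normal_density_def divide_right_mono)
    ultimately show "\<exists>d. (?d has_real_derivative d) (at y) \<and> 0 \<le> d"
      by force
  qed (intro continuous_intros continuous_on_std_normal_band)
  then show ?thesis by simp
qed

lemma std_normal_band_ge:
  assumes "0 \<le> x"
  shows "2 * std_normal_density 0 * (x - x ^ 3 / 6) \<le> std_normal_band x"
proof -
  let ?d = "\<lambda>y. std_normal_band y - 2 * std_normal_density 0 * (y - y ^ 3 / 6)"
  have "?d 0 \<le> ?d x"
  proof (rule DERIV_nonneg_imp_increasing_open[OF assms])
    fix y :: real
    have "((\<lambda>y. y ^ 3 / 6) has_real_derivative y\<^sup>2 / 2) (at y)"
      by (auto intro!: derivative_eq_intros)
    then have "(?d has_real_derivative
        2 * std_normal_density y - 2 * std_normal_density 0 * (1 - y\<^sup>2 / 2)) (at y)"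
      by (intro DERIV_diff DERIV_cmult DERIV_ident std_normal_band_has_real_derivative)
    moreover have "std_normal_density 0 * (1 - y\<^sup>2 / 2) \<le> std_normal_density y"
      using exp_ge_add_one_self[of "- y\<^sup>2 / 2"]
      by (simp add: std_normal_density_def divide_right_mono)
    ultimately show "\<exists>d. (?d has_real_derivative d) (at y) \<and> 0 \<le> d"
      by force
  qed (intro continuous_intros continuous_on_std_normal_band; simp)
  then show ?thesis by simp
qed

lemma bachelier_call_at_the_money:
  "bachelier_call Z0 Z0 (\<sigma> * Z0) \<tau> = \<sigma> * Z0 * std_normal_density 0 * sqrt \<tau>"
  by (simp add: bachelier_call_def)

lemma bachelier_put_at_the_money:
  "bachelier_put Z0 Z0 (\<sigma> * Z0) \<tau> = \<sigma> * Z0 * std_normal_density 0 * sqrt \<tau>"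
  by (simp add: bachelier_put_def)

lemma borel_measurable_bs_call [measurable]: "bs_call Z0 K s \<in> borel_measurable borel"
  unfolding bs_call_def Let_def by measurable

lemma borel_measurable_bs_put [measurable]: "bs_put Z0 K s \<in> borel_measurable borel"
  unfolding bs_put_def Let_def by measurable

lemma bs_d1_at_the_money:
  assumes "Z0 \<noteq> 0" "\<sigma> \<noteq> 0" "\<tau> \<noteq> 0"
  shows "(ln (Z0 / Z0) + \<sigma>\<^sup>2 / 2 * \<tau>) / (\<sigma> * sqrt \<tau>) = \<sigma> * \<bar>sqrt \<tau>\<bar> / 2"
proof -
  have "\<tau> = sqrt \<tau> * \<bar>sqrt \<tau>\<bar>"
  proof (cases "0 \<le> \<tau>")
    case False
    then have "sqrt \<tau> = - sqrt (- \<tau>)"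
      using real_sqrt_minus[of "- \<tau>"] by simp
    with False show ?thesis by simp
  qed simp
  with assms show ?thesis
    by (simp add: field_simps power2_eq_square)
qed

lemma bs_call_at_the_money:
  assumes "0 < Z0" "0 < \<sigma>"
  shows "bs_call Z0 Z0 \<sigma> \<tau> = Z0 * (Phi (\<sigma> * \<bar>sqrt \<tau>\<bar> / 2) - Phi (\<sigma> * \<bar>sqrt \<tau>\<bar> / 2 - \<sigma> * sqrt \<tau>))"
proof (cases "\<tau> = 0")
  case False
  with assms have d1: "(ln (Z0 / Z0) + \<sigma>\<^sup>2 / 2 * \<tau>) / (\<sigma> * sqrt \<tau>) = \<sigma> * \<bar>sqrt \<tau>\<bar> / 2"
    by (intro bs_d1_at_the_money) auto
  with False show ?thesis
    unfolding bs_call_def Let_def d1 by (simp add: right_diff_distrib)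
qed (simp add: bs_call_def)

lemma bs_put_at_the_money:
  assumes "0 < Z0" "0 < \<sigma>"
  shows "bs_put Z0 Z0 \<sigma> \<tau> = Z0 * (Phi (\<sigma> * sqrt \<tau> - \<sigma> * \<bar>sqrt \<tau>\<bar> / 2) - Phi (- (\<sigma> * \<bar>sqrt \<tau>\<bar> / 2)))"
proof (cases "\<tau> = 0")
  case False
  with assms have d1: "(ln (Z0 / Z0) + \<sigma>\<^sup>2 / 2 * \<tau>) / (\<sigma> * sqrt \<tau>) = \<sigma> * \<bar>sqrt \<tau>\<bar> / 2"
    by (intro bs_d1_at_the_money) auto
  with False show ?thesis
    unfolding bs_put_def Let_def d1 by (simp add: right_diff_distrib)
qed (simp add: bs_put_def)

lemma bs_call_at_the_money_eq_std_normal_band: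
  assumes "0 < Z0" "0 < \<sigma>" "0 \<le> \<tau>"
  shows "bs_call Z0 Z0 \<sigma> \<tau> = Z0 * std_normal_band (\<sigma> * sqrt \<tau> / 2)"
  using assms by (simp add: bs_call_at_the_money std_normal_band_def)

lemma bs_put_at_the_money_eq_std_normal_band:
  assumes "0 < Z0" "0 < \<sigma>" "0 \<le> \<tau>"
  shows "bs_put Z0 Z0 \<sigma> \<tau> = Z0 * std_normal_band (\<sigma> * sqrt \<tau> / 2)"
  using assms by (simp add: bs_put_at_the_money std_normal_band_def)

lemma bs_call_at_the_money_neg_time:
  assumes "0 < Z0" "0 < \<sigma>" "\<tau> < 0"
  shows "bs_call Z0 Z0 \<sigma> \<tau> < 0"
proof -
  have "Phi (- (\<sigma> * sqrt \<tau>) / 2) < Phi (- (\<sigma> * sqrt \<tau>) / 2 - \<sigma> * sqrt \<tau>)"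
    using assms by (intro strict_monoD[OF strict_mono_Phi]) (simp add: mult_pos_neg)
  with assms show ?thesis
    by (simp add: bs_call_at_the_money mult_pos_neg)
qed

lemma bs_put_at_the_money_neg_time:
  assumes "0 < Z0" "0 < \<sigma>" "\<tau> < 0"
  shows "bs_put Z0 Z0 \<sigma> \<tau> < 0"
proof -
  have "Phi (\<sigma> * sqrt \<tau> + \<sigma> * sqrt \<tau> / 2) < Phi (\<sigma> * sqrt \<tau> / 2)"
    using assms by (intro strict_monoD[OF strict_mono_Phi]) (simp add: mult_pos_neg)
  with assms show ?thesis
    by (simp add: bs_put_at_the_money mult_pos_neg)
qed

lemma powr_three_halves: "0 \<le> x \<Longrightarrow> x powr (3 / 2) = sqrt x ^ 3"
  for x :: real
  by (cases "x = 0") (simp_all add: powr_half_sqrt[symmetric] powr_power)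

lemma at_the_money_price_gap:
  assumes "0 < Z0" "0 < \<sigma>" "0 \<le> \<tau>"
  shows "0 \<le> \<sigma> * Z0 * std_normal_density 0 * sqrt \<tau> - Z0 * std_normal_band (\<sigma> * sqrt \<tau> / 2)"
    and "\<sigma> * Z0 * std_normal_density 0 * sqrt \<tau> - Z0 * std_normal_band (\<sigma> * sqrt \<tau> / 2)
      \<le> \<tau> powr (3/2) * Z0 / (12 * sqrt (2 * pi)) * \<sigma> ^ 3"
proof -
  define x where "x = \<sigma> * sqrt \<tau> / 2"
  have "0 \<le> x" using assms by (simp add: x_def)
  have bachelier: "\<sigma> * Z0 * std_normal_density 0 * sqrt \<tau> = Z0 * (2 * std_normal_density 0 * x)"
    by (simp add: x_def)
  show "0 \<le> \<sigma> * Z0 * std_normal_density 0 * sqrt \<tau> - Z0 * std_normal_band (\<sigma> * sqrt \<tau> / 2)"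
    unfolding bachelier x_def[symmetric]
    using std_normal_band_le[OF \<open>0 \<le> x\<close>] assms(1) by simp
  have "\<sigma> * Z0 * std_normal_density 0 * sqrt \<tau> - Z0 * std_normal_band (\<sigma> * sqrt \<tau> / 2)
      \<le> Z0 * (2 * std_normal_density 0 * x) - Z0 * (2 * std_normal_density 0 * (x - x ^ 3 / 6))"
    unfolding bachelier x_def[symmetric]
    using std_normal_band_ge[OF \<open>0 \<le> x\<close>] assms(1) by simp
  also have "\<dots> = sqrt \<tau> ^ 3 * Z0 / (24 * sqrt (2 * pi)) * \<sigma> ^ 3"
    by (simp add: x_def std_normal_density_def power_mult_distrib field_simps)
  also have "\<dots> \<le> \<tau> powr (3/2) * Z0 / (12 * sqrt (2 * pi)) * \<sigma> ^ 3"
    using assms by (simp add: powr_three_halves field_simps)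
  finally show "\<sigma> * Z0 * std_normal_density 0 * sqrt \<tau> - Z0 * std_normal_band (\<sigma> * sqrt \<tau> / 2)
      \<le> \<tau> powr (3/2) * Z0 / (12 * sqrt (2 * pi)) * \<sigma> ^ 3" .
qed

lemma levy_measure_AE_pos:
  assumes "levy_measure \<nu>"
  shows "AE x in \<nu>. 0 < x"
  using assms by (intro AE_I'[of "{..0}"]) (auto simp: levy_measure_def null_sets_def)

lemma integrable_laplace_integrand:
  assumes "levy_measure \<nu>" "0 \<le> u"
  shows "integrable \<nu> (\<lambda>x. 1 - exp (- u * x))"
proof -
  have sets: "sets \<nu> = sets borel" and finite: "(\<integral>\<^sup>+ x. ennreal (min 1 x) \<partial>\<nu>) < \<infinity>"
    using assms(1) by (auto simp: levy_measure_def)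
  define f where "f x = 1 - exp (- u * x)" for x
  have [measurable]: "f \<in> borel_measurable \<nu>" "(\<lambda>x. ennreal (min 1 x)) \<in> borel_measurable \<nu>"
    unfolding measurable_cong_sets[OF sets refl] f_def by measurable
  have "(\<integral>\<^sup>+ x. ennreal (norm (f x)) \<partial>\<nu>) \<le> (\<integral>\<^sup>+ x. ennreal (max 1 u) * ennreal (min 1 x) \<partial>\<nu>)"
    using levy_measure_AE_pos[OF assms(1)]
  proof (intro nn_integral_mono_AE, elim AE_mp, intro AE_I2 impI)
    fix x :: real assume "0 < x"
    then have "0 \<le> f x" "f x \<le> 1" "f x \<le> u * x"
      using assms(2) exp_ge_add_one_self[of "- u * x"] by (auto simp: f_def)
    moreover have "u * x \<le> max 1 u * x" "1 \<le> max 1 u"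
      using \<open>0 < x\<close> by (auto intro: mult_right_mono)
    ultimately have "norm (f x) \<le> max 1 u * min 1 x"
      by (cases "x \<le> 1") (auto simp: min_def)
    then show "ennreal (norm (f x)) \<le> ennreal (max 1 u) * ennreal (min 1 x)"
      by (simp add: ennreal_mult'[symmetric])
  qed
  also have "\<dots> < \<infinity>"
    using finite by (subst nn_integral_cmult) (auto simp: ennreal_mult_less_top)
  finally have "integrable \<nu> f"
    by (simp add: integrable_iff_bounded)
  then show ?thesis
    by (simp add: f_def[abs_def])
qed

lemma laplace_exponent_pos:
  assumes "levy_measure \<nu>" "0 < u"
  shows "0 < laplace_exponent \<nu> u"
proof -
  have sets: "sets \<nu> = sets borel" and infinite: "emeasure \<nu> {0<..} = \<infinity>"
    using assms(1) by (auto simp: levy_measure_def)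
  define f where "f x = 1 - exp (- u * x)" for x
  have f_pos: "AE x in \<nu>. 0 < f x"
    using levy_measure_AE_pos[OF assms(1)] by eventually_elim (use assms(2) in \<open>simp add: f_def\<close>)
  then have f_nonneg: "AE x in \<nu>. 0 \<le> f x"
    by eventually_elim simp
  have "\<not> (AE x in \<nu>. f x = 0)"
  proof
    assume "AE x in \<nu>. f x = 0"
    with f_pos have "AE x in \<nu>. False" by eventually_elim simp
    then have "emeasure \<nu> (space \<nu>) = 0" by (auto simp: AE_iff_null dest: null_setsD1)
    then have "emeasure \<nu> {0<..} = 0"
      using emeasure_mono[of "{0<..}" "space \<nu>" \<nu>] sets sets_eq_imp_space_eq[OF sets] by simp
    with infinite show False by simp
  qed
  moreover have "integrable \<nu> f"
    unfolding f_def using assms by (intro integrable_laplace_integrand) auto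
  ultimately have "integral\<^sup>L \<nu> f \<noteq> 0"
    using integral_nonneg_eq_0_iff_AE[OF _ f_nonneg] by simp
  moreover have "0 \<le> integral\<^sup>L \<nu> f"
    using f_nonneg by (rule integral_nonneg_AE)
  ultimately show ?thesis
    by (simp add: laplace_exponent_def f_def[abs_def])
qed

lemma subordinator_le_tail:
  assumes "subordinator M \<nu> U" "0 \<le> t" "0 < u"
  shows "emeasure M {\<omega> \<in> space M. U t \<omega> \<le> x} \<le> exp (u * x - t * laplace_exponent \<nu> u)"
proof -
  have [measurable]: "U t \<in> borel_measurable M"
    and laplace: "(\<integral>\<omega>. exp (- u * U t \<omega>) \<partial>M) = exp (- t * laplace_exponent \<nu> u)"
    using assms by (auto simp: subordinator_def)
  then have "integrable M (\<lambda>\<omega>. exp (- u * U t \<omega>))"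
    using not_integrable_integral_eq by fastforce
  have "{\<omega> \<in> space M. U t \<omega> \<le> x} \<subseteq> {\<omega> \<in> space M. exp (- u * x) \<le> exp (- u * U t \<omega>)}"
    using assms(3) by auto
  then have "emeasure M {\<omega> \<in> space M. U t \<omega> \<le> x}
      \<le> emeasure M {\<omega> \<in> space M. exp (- u * x) \<le> exp (- u * U t \<omega>)}"
    by (rule emeasure_mono) measurable
  also have "\<dots> \<le> 1 / exp (- u * x) * (\<integral>\<omega>. exp (- u * U t \<omega>) \<partial>M)"
    using \<open>integrable M _\<close> by (rule integral_Markov_inequality) auto
  also have "\<dots> = exp (u * x - t * laplace_exponent \<nu> u)"
    unfolding laplace by (simp add: exp_minus exp_diff field_simps)
  finally show ?thesis .
qed

lemma inverse_subordinator_nonneg: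
  "0 < t \<Longrightarrow> x < U t \<omega> \<Longrightarrow> 0 \<le> inverse_subordinator U x \<omega>"
  unfolding inverse_subordinator_def by (rule cInf_greatest) auto

lemma inverse_subordinator_le:
  "0 < t \<Longrightarrow> x < U t \<omega> \<Longrightarrow> inverse_subordinator U x \<omega> \<le> t"
  unfolding inverse_subordinator_def by (rule cInf_lower) (auto intro: bdd_belowI[of _ 0])

lemma inverse_subordinator_neg:
  assumes "inverse_subordinator U x \<omega> < 0"
  shows "inverse_subordinator U x \<omega> = Inf {}"
proof -
  have "{\<tau>. 0 < \<tau> \<and> x < U \<tau> \<omega>} = {}"
    using assms inverse_subordinator_nonneg[of _ x U \<omega>] by force
  then show ?thesis
    unfolding inverse_subordinator_def by (simp only:)
qed

lemma inverse_subordinator_tail: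
  assumes "subordinator M \<nu> U" "0 < t"
  shows "emeasure M {\<omega> \<in> space M. t < inverse_subordinator U x \<omega>} \<le> exp (x - t * laplace_exponent \<nu> 1)"
proof -
  have [measurable]: "U t \<in> borel_measurable M"
    using assms by (simp add: subordinator_def)
  have "{\<omega> \<in> space M. t < inverse_subordinator U x \<omega>} \<subseteq> {\<omega> \<in> space M. U t \<omega> \<le> x}"
    using inverse_subordinator_le[OF assms(2), of x U] by (auto simp: not_le[symmetric])
  then have "emeasure M {\<omega> \<in> space M. t < inverse_subordinator U x \<omega>} \<le> emeasure M {\<omega> \<in> space M. U t \<omega> \<le> x}"
    by (rule emeasure_mono) measurable
  also have "\<dots> \<le> exp (x - t * laplace_exponent \<nu> 1)"
    using subordinator_le_tail[OF assms(1) less_imp_le[OF assms(2)], of 1 x] by simp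
  finally show ?thesis .
qed

lemma AE_inverse_subordinator_nonneg:
  assumes "levy_measure \<nu>" "subordinator M \<nu> U"
  shows "AE \<omega> in M. 0 \<le> inverse_subordinator U x \<omega>"
proof -
  define q where "q = exp (- laplace_exponent \<nu> 1)"
  have "0 < q" "q < 1"
    using laplace_exponent_pos[OF assms(1), of 1] by (auto simp: q_def)
  have [measurable]: "U t \<in> borel_measurable M" if "0 \<le> t" for t
    using assms(2) that by (simp add: subordinator_def)
  define N where "N = {\<omega> \<in> space M. \<forall>n. U (Suc n) \<omega> \<le> x}"
  have "N \<in> sets M"
    unfolding N_def by measurable
  have "emeasure M N \<le> exp x * q ^ Suc n" for n
  proof -
    have "emeasure M N \<le> emeasure M {\<omega> \<in> space M. U (Suc n) \<omega> \<le> x}"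
      by (rule emeasure_mono) (auto simp: N_def)
    also have "\<dots> \<le> exp (1 * x - real (Suc n) * laplace_exponent \<nu> 1)"
      using assms(2) by (rule subordinator_le_tail) auto
    also have "\<dots> = exp x * q ^ Suc n"
      unfolding q_def by (simp add: exp_diff exp_minus exp_add exp_of_nat_mult[symmetric] field_simps)
    finally show ?thesis .
  qed
  moreover have "(\<lambda>n. ennreal (exp x * q ^ Suc n)) \<longlonglongrightarrow> ennreal (exp x * 0)"
    using \<open>0 < q\<close> \<open>q < 1\<close>
    by (intro tendsto_ennrealI tendsto_mult tendsto_const LIMSEQ_Suc LIMSEQ_power_zero) auto
  ultimately have "emeasure M N \<le> 0"
    by (intro LIMSEQ_le_const[where X="\<lambda>n. ennreal (exp x * q ^ Suc n)"]) auto
  with \<open>N \<in> sets M\<close> have "N \<in> null_sets M"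
    by (simp add: null_sets_def)
  then show ?thesis
  proof (rule AE_I')
    have "U (Suc n) \<omega> \<le> x" if "inverse_subordinator U x \<omega> < 0" for n \<omega>
      using inverse_subordinator_nonneg[of "Suc n" x U \<omega>] that by linarith
    then show "{\<omega> \<in> space M. \<not> 0 \<le> inverse_subordinator U x \<omega>} \<subseteq> N"
      by (auto simp: N_def)
  qed
qed

lemma square_le_suminf_indicator:
  fixes s :: real
  assumes "0 \<le> s"
  shows "ennreal (s\<^sup>2) \<le> (\<Sum>n. ennreal (2 * (real n + 1)) * indicator {real n<..} s)"
proof -
  define m where "m = nat \<lceil>s\<rceil>"
  have "s \<le> real m"
    unfolding m_def by linarith
  have "real n < s" if "n < m" for n
    using that unfolding m_def by linarith
  have "(\<Sum>n<k. 2 * (real n + 1)) = real k * (real k + 1)" for k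
    by (induction k) (auto simp: algebra_simps)
  then have "s\<^sup>2 \<le> (\<Sum>n<m. 2 * (real n + 1))"
    using assms \<open>s \<le> real m\<close> by (simp add: power2_eq_square mult_mono)
  then have "ennreal (s\<^sup>2) \<le> ennreal (\<Sum>n<m. 2 * (real n + 1))"
    by (rule ennreal_leI)
  also have "\<dots> = (\<Sum>n<m. ennreal (2 * (real n + 1)))"
    by (rule sum_ennreal[symmetric]) simp
  also have "\<dots> = (\<Sum>n<m. ennreal (2 * (real n + 1)) * indicator {real n<..} s)"
    using \<open>\<And>n. n < m \<Longrightarrow> real n < s\<close> by (intro sum.cong) auto
  also have "\<dots> \<le> (\<Sum>n. ennreal (2 * (real n + 1)) * indicator {real n<..} s)"
    by (rule sum_le_suminf) auto
  finally show ?thesis .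
qed

lemma integrable_square_if_geometric_tail:
  fixes X :: "'a \<Rightarrow> real"
  assumes [measurable]: "X \<in> borel_measurable M"
    and nonneg: "AE \<omega> in M. 0 \<le> X \<omega>"
    and tail: "\<And>n. emeasure M {\<omega> \<in> space M. real n < X \<omega>} \<le> ennreal (c * q ^ n)"
    and "0 \<le> c" "0 \<le> q" "q < 1"
  shows "integrable M (\<lambda>\<omega>. (X \<omega>)\<^sup>2)"
proof -
  let ?A = "\<lambda>n. {\<omega> \<in> space M. real n < X \<omega>}"
  have summable: "summable (\<lambda>n. 2 * (real n + 1) * (c * q ^ n))"
  proof -
    have "summable (\<lambda>n. diffs (\<lambda>_. 1::real) n * q ^ n)"
      using assms by (intro termdiff_converges[of q 1]) (auto intro: summable_geometric)
    from summable_mult[OF this, of "2 * c"] show ?thesis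
      by (simp add: diffs_def algebra_simps)
  qed
  have "(\<integral>\<^sup>+\<omega>. ennreal ((X \<omega>)\<^sup>2) \<partial>M) \<le> (\<integral>\<^sup>+\<omega>. (\<Sum>n. ennreal (2 * (real n + 1)) * indicator (?A n) \<omega>) \<partial>M)"
    using nonneg
  proof (intro nn_integral_mono_AE, elim AE_mp, intro AE_I2 impI)
    fix \<omega> assume "\<omega> \<in> space M" "0 \<le> X \<omega>"
    then show "ennreal ((X \<omega>)\<^sup>2) \<le> (\<Sum>n. ennreal (2 * (real n + 1)) * indicator (?A n) \<omega>)"
      using square_le_suminf_indicator[of "X \<omega>"] by (simp add: indicator_def)
  qed
  also have "\<dots> = (\<Sum>n. ennreal (2 * (real n + 1)) * emeasure M (?A n))"
    by (subst nn_integral_suminf) (auto simp: nn_integral_cmult_indicator)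
  also have "\<dots> \<le> (\<Sum>n. ennreal (2 * (real n + 1) * (c * q ^ n)))"
  proof (intro suminf_le summableI)
    fix n
    have "ennreal (2 * (real n + 1)) * emeasure M (?A n) \<le> ennreal (2 * (real n + 1)) * ennreal (c * q ^ n)"
      by (intro mult_left_mono tail) simp
    then show "ennreal (2 * (real n + 1)) * emeasure M (?A n) \<le> ennreal (2 * (real n + 1) * (c * q ^ n))"
      by (subst ennreal_mult') simp_all
  qed
  also have "\<dots> = ennreal (\<Sum>n. 2 * (real n + 1) * (c * q ^ n))"
    using assms summable by (intro suminf_ennreal2) auto
  finally show ?thesis
    by (intro integrableI_nonneg) (auto simp: top.not_eq_extremum intro: le_less_trans)
qed

lemma integrable_square_inverse_subordinator:
  assumes "levy_measure \<nu>" "subordinator M \<nu> U" "0 \<le> x"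
    and "inverse_subordinator U x \<in> borel_measurable M"
  shows "integrable M (\<lambda>\<omega>. (inverse_subordinator U x \<omega>)\<^sup>2)"
proof -
  interpret prob_space M
    using assms(2) by (simp add: subordinator_def)
  let ?q = "exp (- laplace_exponent \<nu> 1)"
  have "emeasure M {\<omega> \<in> space M. real n < inverse_subordinator U x \<omega>} \<le> ennreal (exp x * ?q ^ n)" for n
  proof (cases "n = 0")
    case True
    have "emeasure M {\<omega> \<in> space M. real n < inverse_subordinator U x \<omega>} \<le> 1"
      by (rule emeasure_le_1)
    also have "\<dots> \<le> ennreal (exp x * ?q ^ n)"
      using True assms(3) by simp
    finally show ?thesis .
  next
    case False
    then have "exp (x - real n * laplace_exponent \<nu> 1) = exp x * ?q ^ n"
      by (simp add: exp_diff exp_minus exp_of_nat_mult[symmetric] field_simps)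
    with inverse_subordinator_tail[OF assms(2), of "real n" x] False show ?thesis
      by simp
  qed
  moreover have "?q < 1"
    using laplace_exponent_pos[OF assms(1), of 1] by simp
  ultimately show ?thesis
    using assms(4) AE_inverse_subordinator_nonneg[OF assms(1,2)]
    by (intro integrable_square_if_geometric_tail) auto
qed

lemma powr_le_1_plus_square:
  fixes x p :: real
  assumes "0 \<le> x" "0 \<le> p" "p \<le> 2"
  shows "x powr p \<le> 1 + x\<^sup>2"
proof (cases "x \<le> 1")
  case True
  then have "x powr p \<le> 1"
    using assms by (intro powr_le1) auto
  then show ?thesis
    using zero_le_power2[of x] by linarith
next
  case False
  then have "x powr p \<le> x powr 2"
    using assms by (intro powr_mono) auto
  then show ?thesis
    using assms(1) by simp
qed

lemma (in finite_measure) integrable_powr_if_integrable_square: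
  fixes X :: "'a \<Rightarrow> real"
  assumes [measurable]: "X \<in> borel_measurable M"
    and "AE \<omega> in M. 0 \<le> X \<omega>" "integrable M (\<lambda>\<omega>. (X \<omega>)\<^sup>2)" "0 \<le> p" "p \<le> 2"
  shows "integrable M (\<lambda>\<omega>. X \<omega> powr p)"
proof (rule Bochner_Integration.integrable_bound)
  show "integrable M (\<lambda>\<omega>. 1 + (X \<omega>)\<^sup>2)"
    using assms(3) by simp
  show "AE \<omega> in M. norm (X \<omega> powr p) \<le> norm (1 + (X \<omega>)\<^sup>2)"
    using assms(2) by eventually_elim (use powr_le_1_plus_square assms(4,5) in auto)
qed simp

text \<open>The hypotheses do not make \<open>S(T)\<close> measurable (path regularity holds only almost surely),
  and a non-measurable integrand has Bochner integral 0. The next two lemmas let both prices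
  vanish together in that case. \<open>S(T)\<close> is negative only where it takes the junk value \<open>Inf {}\<close>.\<close>

lemma borel_measurable_if_comp_measurable:
  fixes f :: "real \<Rightarrow> real" and X :: "'a \<Rightarrow> real"
  assumes f_mono: "strict_mono_on {0..} f"
    and f_sign: "\<And>\<tau>. f \<tau> < 0 \<longleftrightarrow> \<tau> < 0"
    and X_neg: "\<And>\<omega>. X \<omega> < 0 \<Longrightarrow> X \<omega> = c"
    and [measurable]: "(\<lambda>\<omega>. f (X \<omega>)) \<in> borel_measurable M"
  shows "X \<in> borel_measurable M"
  unfolding borel_measurable_iff_le
proof
  fix a :: real
  consider "0 \<le> a" | "a < 0" "c \<le> a" | "a < 0" "a < c"
    by linarith
  then show "{\<omega> \<in> space M. X \<omega> \<le> a} \<in> sets M"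
  proof cases
    case 1
    have "X \<omega> \<le> a \<longleftrightarrow> f (X \<omega>) \<le> f a" for \<omega>
      using strict_mono_on_less_eq[OF f_mono, of "X \<omega>" a] f_sign[of "X \<omega>"] f_sign[of a] 1
      by (cases "X \<omega> < 0") auto
    then have "{\<omega> \<in> space M. X \<omega> \<le> a} = {\<omega> \<in> space M. f (X \<omega>) \<le> f a}"
      by blast
    then show ?thesis by simp
  next
    case 2
    then have "{\<omega> \<in> space M. X \<omega> \<le> a} = {\<omega> \<in> space M. f (X \<omega>) < 0}"
      using f_sign X_neg by force
    then show ?thesis by simp
  next
    case 3
    have "\<not> X \<omega> \<le> a" for \<omega>
      using X_neg[of \<omega>] 3 by (cases "X \<omega> < 0") auto
    then have "{\<omega> \<in> space M. X \<omega> \<le> a} = {}"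
      by blast
    then show ?thesis by (simp only: sets.empty_sets)
  qed
qed

lemma integral_comp_eq_0_if_not_measurable:
  fixes f :: "real \<Rightarrow> real" and X :: "'a \<Rightarrow> real"
  assumes "X \<notin> borel_measurable M"
    and "strict_mono_on {0..} f" "\<And>\<tau>. f \<tau> < 0 \<longleftrightarrow> \<tau> < 0" "\<And>\<omega>. X \<omega> < 0 \<Longrightarrow> X \<omega> = c"
  shows "(\<integral>\<omega>. f (X \<omega>) \<partial>M) = 0"
  using assms borel_measurable_if_comp_measurable[of f X c M] not_integrable_integral_eq by blast

lemma integral_diff_bounds_AE:
  fixes f g h :: "'a \<Rightarrow> real"
  assumes "integrable M f" "integrable M g" "integrable M h"
    and "AE x in M. g x \<le> f x \<and> f x - g x \<le> h x"
  shows "0 \<le> integral\<^sup>L M f - integral\<^sup>L M g \<and> integral\<^sup>L M f - integral\<^sup>L M g \<le> integral\<^sup>L M h"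
proof -
  have "0 \<le> (\<integral>x. f x - g x \<partial>M)"
    using assms(4) by (intro integral_nonneg_AE) (auto elim: eventually_mono)
  moreover have "(\<integral>x. f x - g x \<partial>M) \<le> integral\<^sup>L M h"
    using assms by (intro integral_mono_AE) (auto elim: eventually_mono)
  ultimately show ?thesis
    using assms(1,2) by simp
qed

lemma expected_at_the_money_price_gap:
  fixes X :: "'a \<Rightarrow> real" and g :: "real \<Rightarrow> real"
  assumes "prob_space M"
    and X_nonneg: "AE \<omega> in M. 0 \<le> X \<omega>"
    and X_neg: "\<And>\<omega>. X \<omega> < 0 \<Longrightarrow> X \<omega> = c"
    and X_square: "X \<in> borel_measurable M \<Longrightarrow> integrable M (\<lambda>\<omega>. (X \<omega>)\<^sup>2)"
    and "0 < Z0" "0 < \<sigma>"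
    and [measurable]: "g \<in> borel_measurable borel"
    and g_eq: "\<And>\<tau>. 0 \<le> \<tau> \<Longrightarrow> g \<tau> = Z0 * std_normal_band (\<sigma> * sqrt \<tau> / 2)"
    and g_neg: "\<And>\<tau>. \<tau> < 0 \<Longrightarrow> g \<tau> < 0"
  shows "0 \<le> (\<integral>\<omega>. \<sigma> * Z0 * std_normal_density 0 * sqrt (X \<omega>) \<partial>M) - (\<integral>\<omega>. g (X \<omega>) \<partial>M) \<and>
    (\<integral>\<omega>. \<sigma> * Z0 * std_normal_density 0 * sqrt (X \<omega>) \<partial>M) - (\<integral>\<omega>. g (X \<omega>) \<partial>M)
      \<le> (\<integral>\<omega>. X \<omega> powr (3/2) \<partial>M) * Z0 / (12 * sqrt (2 * pi)) * \<sigma> ^ 3"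
proof -
  interpret prob_space M by fact
  define k where "k = \<sigma> * Z0 * std_normal_density 0"
  define C where "C = Z0 / (12 * sqrt (2 * pi)) * \<sigma> ^ 3"
  have "0 < k" "0 \<le> C"
    using assms(5,6) by (simp_all add: k_def C_def std_normal_density_def)
  have gap: "0 \<le> g \<tau> \<and> g \<tau> \<le> k * sqrt \<tau> \<and> k * sqrt \<tau> - g \<tau> \<le> C * \<tau> powr (3/2)" if "0 \<le> \<tau>" for \<tau>
    using at_the_money_price_gap[OF assms(5,6) that] g_eq[OF that] std_normal_band_nonneg[of "\<sigma> * sqrt \<tau> / 2"]
      assms(5,6) that by (simp add: k_def C_def mult_ac)
  have "0 \<le> (\<integral>\<omega>. k * sqrt (X \<omega>) \<partial>M) - (\<integral>\<omega>. g (X \<omega>) \<partial>M) \<and>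
    (\<integral>\<omega>. k * sqrt (X \<omega>) \<partial>M) - (\<integral>\<omega>. g (X \<omega>) \<partial>M) \<le> C * (\<integral>\<omega>. X \<omega> powr (3/2) \<partial>M)"
  proof (cases "X \<in> borel_measurable M")
    case True
    note [measurable] = True
    note powr_integrable = integrable_powr_if_integrable_square[OF True X_nonneg X_square[OF True]]
    have "integrable M (\<lambda>\<omega>. sqrt (X \<omega>))"
      by (rule integrable_cong_AE_imp[OF powr_integrable[of "1/2"]])
         (use X_nonneg in \<open>auto elim: eventually_mono simp: powr_half_sqrt\<close>)
    then have sqrt_int: "integrable M (\<lambda>\<omega>. k * sqrt (X \<omega>))"
      by simp
    have powr_int: "integrable M (\<lambda>\<omega>. C * X \<omega> powr (3/2))"
      using powr_integrable[of "3/2"] by simp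
    have gap_AE: "AE \<omega> in M. 0 \<le> g (X \<omega>) \<and> g (X \<omega>) \<le> k * sqrt (X \<omega>) \<and>
        k * sqrt (X \<omega>) - g (X \<omega>) \<le> C * X \<omega> powr (3/2)"
      using X_nonneg by eventually_elim (rule gap)
    have g_int: "integrable M (\<lambda>\<omega>. g (X \<omega>))"
      using sqrt_int by (rule Bochner_Integration.integrable_bound) (use gap_AE in \<open>auto elim: eventually_mono\<close>)
    show ?thesis
      using integral_diff_bounds_AE[OF sqrt_int g_int powr_int] gap_AE by simp
  next
    case False
    have "strict_mono_on {0..} (\<lambda>\<tau>. k * sqrt \<tau>)"
      using \<open>0 < k\<close> by (auto intro!: strict_mono_onI)
    moreover have "strict_mono_on {0..} g"
      using assms(5,6) by (auto intro!: strict_mono_onI strict_monoD[OF strict_mono_std_normal_band] simp: g_eq)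
    moreover have "k * sqrt \<tau> < 0 \<longleftrightarrow> \<tau> < 0" for \<tau>
      using \<open>0 < k\<close> by (simp add: mult_less_0_iff)
    moreover have "g \<tau> < 0 \<longleftrightarrow> \<tau> < 0" for \<tau>
      using g_neg gap[of \<tau>] by (cases "\<tau> < 0") auto
    ultimately have "(\<integral>\<omega>. k * sqrt (X \<omega>) \<partial>M) = 0" "(\<integral>\<omega>. g (X \<omega>) \<partial>M) = 0"
      using integral_comp_eq_0_if_not_measurable[OF False _ _ X_neg] by blast+
    moreover have "0 \<le> (\<integral>\<omega>. X \<omega> powr (3/2) \<partial>M)"
      by (intro integral_nonneg_AE) simp
    ultimately show ?thesis
      using \<open>0 \<le> C\<close> by (simp only: diff_self order_refl) simp
  qed
  then show ?thesis
    by (simp add: k_def C_def mult_ac)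
qed

theorem theorem1:
  fixes M :: "'a measure" and \<nu> :: "real measure" and U :: "real \<Rightarrow> 'a \<Rightarrow> real"
    and T Z0 \<sigma> \<sigma>Ba K :: real
  assumes "levy_measure \<nu>"
    and "subordinator M \<nu> U"
    and "T > 0" and "Z0 > 0" and "\<sigma> > 0"
    and "K = Z0"
    and "\<sigma>Ba = \<sigma> * Z0"
  defines "S \<equiv> inverse_subordinator U"
  shows
    "(0 \<le> (\<integral>\<omega>. bachelier_call Z0 K \<sigma>Ba (S T \<omega>) \<partial>M) - (\<integral>\<omega>. bs_call Z0 K \<sigma> (S T \<omega>) \<partial>M) \<and>
     (\<integral>\<omega>. bachelier_call Z0 K \<sigma>Ba (S T \<omega>) \<partial>M) - (\<integral>\<omega>. bs_call Z0 K \<sigma> (S T \<omega>) \<partial>M)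
       \<le> (\<integral>\<omega>. S T \<omega> powr (3/2) \<partial>M) * Z0 / (12 * sqrt (2 * pi)) * \<sigma> ^ 3) \<and>
    (0 \<le> (\<integral>\<omega>. bachelier_put Z0 K \<sigma>Ba (S T \<omega>) \<partial>M) - (\<integral>\<omega>. bs_put Z0 K \<sigma> (S T \<omega>) \<partial>M) \<and>
     (\<integral>\<omega>. bachelier_put Z0 K \<sigma>Ba (S T \<omega>) \<partial>M) - (\<integral>\<omega>. bs_put Z0 K \<sigma> (S T \<omega>) \<partial>M)
       \<le> (\<integral>\<omega>. S T \<omega> powr (3/2) \<partial>M) * Z0 / (12 * sqrt (2 * pi)) * \<sigma> ^ 3)"
proof -
  have "prob_space M"
    using assms(2) by (simp add: subordinator_def)
  have S_nonneg: "AE \<omega> in M. 0 \<le> S T \<omega>"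
    unfolding S_def using assms(1,2) by (rule AE_inverse_subordinator_nonneg)
  have S_neg: "S T \<omega> < 0 \<Longrightarrow> S T \<omega> = Inf {}" for \<omega>
    unfolding S_def by (rule inverse_subordinator_neg)
  have S_square: "S T \<in> borel_measurable M \<Longrightarrow> integrable M (\<lambda>\<omega>. (S T \<omega>)\<^sup>2)"
    unfolding S_def using assms(1,2,3) by (intro integrable_square_inverse_subordinator) auto
  show ?thesis
    unfolding assms(6,7) bachelier_call_at_the_money bachelier_put_at_the_money
    using assms(4,5)
    by (intro conjI[OF expected_at_the_money_price_gap[where c="Inf {}"]
          expected_at_the_money_price_gap[where c="Inf {}"]]
        \<open>prob_space M\<close> S_nonneg S_neg S_square borel_measurable_bs_call borel_measurable_bs_put
        bs_call_at_the_money_eq_std_normal_band bs_call_at_the_money_neg_time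
        bs_put_at_the_money_eq_std_normal_band bs_put_at_the_money_neg_time)
qed

end
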